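(* Let $G=(g_1,\dots,g_k)\in\mathbb{N}_0^k$ be telescopic with $g_1>0$, $c(G)=(c_2,\dots,c_k)$ and $d=\gcd(G)$, and put $z_i=g_i/C_{i,k}$ for $1\le i\le k$ (these are non-negative integers, multiples of $d$, with $z_1=d$). Then $G$ is minimal if and only if $c_j>1$ for all $2\le j\le k$ and $z_j\nmid z_iC_{i,j}$ for all $1\le i<j\le k$.
   Context: For $G\in\mathbb{N}_0^k$, $\langle G\rangle$ is the set of $\mathbb{N}_0$-linear combinations of its entries; $G$ is minimal if no proper subsequence generates $\langle G\rangle$. $G_i=(g_1,\dots,g_i)$, $d_i=\gcd(G_i)$, $c_j=d_{j-1}/d_j$ for $2\le j\le k$. $G$ is telescopic if $c_jg_j\in\langle G_{j-1}\rangle$ for $2\le j\le k$. For $0\le m,n$, $C_{m,n}=\prod_{j=m+1}^n c_j$, an empty product (when $n\le m$) being $1$. Here $a\mid b$ means $b=at$ for some integer $t$. *)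

theory Defs
  imports Main
begin

text \<open>A sequence G = (g_1,...,g_k) is represented by a function g :: nat => nat
  together with its length k; only the values g 1, ..., g k matter.
  Subsequences are given by sets of indices I \<subseteq> {1..k}.\<close>

definition gen :: "(nat \<Rightarrow> nat) \<Rightarrow> nat set \<Rightarrow> nat set" where
  "gen g I = {\<Sum>i\<in>I. a i * g i | a. True}"

definition minimal :: "(nat \<Rightarrow> nat) \<Rightarrow> nat \<Rightarrow> bool" where
  "minimal g k \<longleftrightarrow> \<not> (\<exists>I. I \<subset> {1..k} \<and> gen g I = gen g {1..k})"

definition dseq :: "(nat \<Rightarrow> nat) \<Rightarrow> nat \<Rightarrow> nat" where
  "dseq g i = Gcd (g ` {1..i})"

definition cseq :: "(nat \<Rightarrow> nat) \<Rightarrow> nat \<Rightarrow> nat" where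
  "cseq g j = dseq g (j - 1) div dseq g j"

definition telescopic :: "(nat \<Rightarrow> nat) \<Rightarrow> nat \<Rightarrow> bool" where
  "telescopic g k \<longleftrightarrow> (\<forall>j\<in>{2..k}. cseq g j * g j \<in> gen g {1..j-1})"

definition Cprod :: "(nat \<Rightarrow> nat) \<Rightarrow> nat \<Rightarrow> nat \<Rightarrow> nat" where
  "Cprod g m n = (\<Prod>j\<in>{m+1..n}. cseq g j)"

definition zseq :: "(nat \<Rightarrow> nat) \<Rightarrow> nat \<Rightarrow> nat \<Rightarrow> nat" where
  "zseq g k i = g i div Cprod g i k"

end

theory Submission
  imports Defs
begin

text \<open>Since C_{j,k} d_k = d_j and C_{i,j} C_{j,k} = C_{i,k}, we have z_j C_{j,k} = g_j, so
  z_j | z_i C_{i,j} just says g_j | g_i. Minimality means that no g_m lies in the semigroup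
  generated by the other entries. If c_j = 1, the telescopic relation puts g_j into
  \<langle>G_{j-1}\<rangle>; if g_j | g_i, then g_i is a multiple of g_j. Conversely, take a representation
  of g_m not using g_m and let j > m be its largest index. Divisibility by d_{j-1} forces
  c_j | a_j, so the telescopic relation c_j g_j = \<Sum> b_i g_i (i < j) eliminates g_j, unless
  b_m > 0, in which case g_m \<ge> c_j g_j \<ge> g_m and g_j | g_m. Once all indices are below m,
  d_{m-1} | g_m, contradicting c_m > 1 (or g_1 > 0 if m = 1).\<close>

lemma dseq_Suc: "dseq g (Suc n) = gcd (g (Suc n)) (dseq g n)"
  unfolding dseq_def by (simp add: atLeastAtMostSuc_conv Gcd_insert)

lemma dseq_dvd: "1 \<le> i \<Longrightarrow> i \<le> n \<Longrightarrow> dseq g n dvd g i"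
  unfolding dseq_def by (rule Gcd_dvd) auto

lemma dseq_dvd_dseq: "m \<le> n \<Longrightarrow> dseq g n dvd dseq g m"
  unfolding dseq_def by (rule Gcd_greatest) (auto intro!: Gcd_dvd)

lemma dseq_pos: "g 1 > 0 \<Longrightarrow> 1 \<le> n \<Longrightarrow> dseq g n > 0"
  using dseq_dvd[of 1 n g] by (cases "dseq g n = 0") auto

lemma cseq_mult_dseq: "cseq g j * dseq g j = dseq g (j - 1)"
  unfolding cseq_def by (simp add: dseq_dvd_dseq)

lemma cseq_pos:
  assumes "g 1 > 0" "2 \<le> j"
  shows "cseq g j > 0"
proof -
  have "dseq g (j - 1) > 0"
    using dseq_pos[of g "j - 1"] assms by simp
  then show ?thesis
    using cseq_mult_dseq[of g j] by (cases "cseq g j = 0") auto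
qed

lemma cseq_dvd_coeff:
  assumes "g 1 > 0" "1 \<le> j" "dseq g (j - 1) dvd v * g j"
  shows "cseq g j dvd v"
proof -
  have "dseq g (j - 1) dvd gcd (v * g j) (v * dseq g (j - 1))"
    using assms(3) by simp
  also have "gcd (v * g j) (v * dseq g (j - 1)) = v * dseq g j"
    using dseq_Suc[of g "j - 1"] assms(2) by (simp add: gcd_mult_left)
  finally have "cseq g j * dseq g j dvd v * dseq g j"
    by (simp add: cseq_mult_dseq)
  then show ?thesis
    using dseq_pos[of g j] assms(1,2) by simp
qed

lemma Cprod_mult_dseq: "m \<le> n \<Longrightarrow> Cprod g m n * dseq g n = dseq g m"
proof (induction n rule: dec_induct)
  case base
  then show ?case by (simp add: Cprod_def)
next
  case (step n)
  have "Cprod g m (Suc n) = Cprod g m n * cseq g (Suc n)"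
    unfolding Cprod_def using step by (simp add: prod.cl_ivl_Suc)
  then show ?case
    using step.IH cseq_mult_dseq[of g "Suc n"] by (simp add: mult.assoc)
qed

lemma Cprod_mult_Cprod:
  assumes "i \<le> j" "j \<le> k"
  shows "Cprod g i j * Cprod g j k = Cprod g i k"
proof -
  have "{i+1..j} \<union> {j+1..k} = {i+1..k}" "{i+1..j} \<inter> {j+1..k} = {}"
    using assms by auto
  then show ?thesis
    unfolding Cprod_def by (metis finite_atLeastAtMost prod.union_disjoint)
qed

lemma zseq_mult_Cprod:
  assumes "1 \<le> i" "i \<le> k"
  shows "zseq g k i * Cprod g i k = g i"
proof -
  have "Cprod g i k dvd dseq g i"
    using Cprod_mult_dseq[of i k g] assms(2) by (metis dvd_triv_left)
  also have "dseq g i dvd g i"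
    using dseq_dvd[of i i g] assms(1) by simp
  finally show ?thesis
    unfolding zseq_def by simp
qed

lemma zseq_dvd_iff:
  assumes "g 1 > 0" "1 \<le> i" "i < j" "j \<le> k"
  shows "zseq g k j dvd zseq g k i * Cprod g i j \<longleftrightarrow> g j dvd g i"
proof -
  have "Cprod g j k \<noteq> 0"
    using Cprod_mult_dseq[of j k g] dseq_pos[of g j] assms by (cases "Cprod g j k = 0") auto
  then have "zseq g k j dvd zseq g k i * Cprod g i j \<longleftrightarrow>
      zseq g k j * Cprod g j k dvd zseq g k i * (Cprod g i j * Cprod g j k)"
    by (simp add: mult.assoc)
  also have "\<dots> \<longleftrightarrow> g j dvd g i"
    using zseq_mult_Cprod[of i k g] zseq_mult_Cprod[of j k g] Cprod_mult_Cprod[of i j k g] assms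
    by simp
  finally show ?thesis .
qed

lemma mem_genI: "x = (\<Sum>i\<in>I. a i * g i) \<Longrightarrow> x \<in> gen g I"
  unfolding gen_def by blast

lemma mem_gen_superset:
  assumes "finite J" "I \<subseteq> J" "x \<in> gen g I"
  obtains a where "x = (\<Sum>i\<in>J. a i * g i)" "\<forall>i\<in>J - I. a i = 0"
proof -
  obtain b where x: "x = (\<Sum>i\<in>I. b i * g i)"
    using assms(3) unfolding gen_def by blast
  let ?a = "\<lambda>i. if i \<in> I then b i else 0"
  have "(\<Sum>i\<in>J. ?a i * g i) = x"
    unfolding x using assms(1,2) by (intro sum.mono_neutral_cong_right) auto
  then show thesis
    using that[of ?a] by simp
qed

lemma gen_mono:
  assumes "finite J" "I \<subseteq> J"
  shows "gen g I \<subseteq> gen g J"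
proof
  fix x assume "x \<in> gen g I"
  then obtain a where "x = (\<Sum>i\<in>J. a i * g i)"
    using mem_gen_superset[OF assms] by blast
  then show "x \<in> gen g J"
    by (rule mem_genI)
qed

lemma mult_mem_gen: "finite J \<Longrightarrow> j \<in> J \<Longrightarrow> t * g j \<in> gen g J"
  using gen_mono[of J "{j}" g] mem_genI[where x="t * g j" and I="{j}" and a="\<lambda>_. t"] by auto

lemma dseq_dvd_mem_gen: "x \<in> gen g {1..n} \<Longrightarrow> dseq g n dvd x"
  unfolding gen_def by (auto intro!: dvd_sum dvd_mult dseq_dvd)

lemma gen_Diff_redundant:
  assumes fin: "finite J" and m: "m \<in> J" and redundant: "g m \<in> gen g (J - {m})"
  shows "gen g (J - {m}) = gen g J"
proof
  show "gen g (J - {m}) \<subseteq> gen g J"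
    using gen_mono[OF fin] by blast
next
  obtain b where b: "g m = (\<Sum>i\<in>J - {m}. b i * g i)"
    using redundant unfolding gen_def by auto
  show "gen g J \<subseteq> gen g (J - {m})"
  proof
    fix x assume "x \<in> gen g J"
    then obtain a where x: "x = (\<Sum>i\<in>J. a i * g i)"
      unfolding gen_def by auto
    have "x = a m * g m + (\<Sum>i\<in>J - {m}. a i * g i)"
      using x sum.remove[OF fin m] by simp
    also have "\<dots> = (\<Sum>i\<in>J - {m}. (a m * b i + a i) * g i)"
      unfolding b by (simp add: sum_distrib_left sum.distrib algebra_simps)
    finally show "x \<in> gen g (J - {m})"
      by (rule mem_genI)
  qed
qed

lemma minimal_iff_irredundant:
  "minimal g k \<longleftrightarrow> (\<forall>m\<in>{1..k}. g m \<notin> gen g ({1..k} - {m}))"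
proof
  assume min: "minimal g k"
  show "\<forall>m\<in>{1..k}. g m \<notin> gen g ({1..k} - {m})"
  proof (intro ballI notI)
    fix m assume "m \<in> {1..k}" "g m \<in> gen g ({1..k} - {m})"
    then have "{1..k} - {m} \<subset> {1..k}" "gen g ({1..k} - {m}) = gen g {1..k}"
      using gen_Diff_redundant[of "{1..k}" m g] by auto
    then show False
      using min unfolding minimal_def by blast
  qed
next
  assume irredundant: "\<forall>m\<in>{1..k}. g m \<notin> gen g ({1..k} - {m})"
  show "minimal g k"
    unfolding minimal_def
  proof
    assume "\<exists>I. I \<subset> {1..k} \<and> gen g I = gen g {1..k}"
    then obtain I m where I: "I \<subset> {1..k}" "gen g I = gen g {1..k}"
      and m: "m \<in> {1..k}" "m \<notin> I"
      by blast
    have "g m \<in> gen g I"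
      using mult_mem_gen[of "{1..k}" m 1 g] m I by simp
    also have "gen g I \<subseteq> gen g ({1..k} - {m})"
      using I m by (intro gen_mono) auto
    finally show False
      using irredundant m by blast
  qed
qed

lemma redundant_if_cseq_eq_1:
  assumes "telescopic g k" "j \<in> {2..k}" "cseq g j = 1"
  shows "g j \<in> gen g ({1..k} - {j})"
proof -
  have "g j \<in> gen g {1..j-1}"
    using assms unfolding telescopic_def by force
  also have "gen g {1..j-1} \<subseteq> gen g ({1..k} - {j})"
    using assms(2) by (intro gen_mono) auto
  finally show ?thesis .
qed

lemma redundant_if_dvd:
  assumes "i \<in> {1..k}" "j \<in> {1..k}" "i \<noteq> j" "g j dvd g i"
  shows "g i \<in> gen g ({1..k} - {i})"
proof -
  obtain t where "g i = t * g j"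
    using assms(4) by (metis dvd_def mult.commute)
  then show ?thesis
    using mult_mem_gen[of "{1..k} - {i}" j t g] assms by simp
qed

lemma not_mem_gen_below:
  assumes "g 1 > 0" "\<forall>j\<in>{2..k}. cseq g j > 1" "1 \<le> m" "m \<le> k" "n < m"
  shows "g m \<notin> gen g {1..n}"
proof
  assume mem: "g m \<in> gen g {1..n}"
  show False
  proof (cases "m = 1")
    case True
    then show False
      using mem assms(1,5) by (simp add: gen_def)
  next
    case False
    have "dseq g (m - 1) dvd g m"
      using dseq_dvd_mem_gen[OF mem] dseq_dvd_dseq[of n "m - 1" g] assms(5)
      by (auto intro: dvd_trans)
    then have "dseq g m = dseq g (m - 1)"
      using dseq_Suc[of g "m - 1"] False assms(3) by (simp add: gcd_nat.absorb2)
    then have "cseq g m = 1"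
      using cseq_mult_dseq[of g m] dseq_pos[of g m] assms(1,3) by simp
    moreover have "m \<in> {2..k}"
      using assms(3,4) False by auto
    ultimately show False
      using assms(2) by (metis less_irrefl)
  qed
qed

lemma telescopic_shorten_representation:
  assumes g1: "g 1 > 0" and tel: "telescopic g k" and n: "1 \<le> n" "Suc n \<le> k"
    and m: "1 \<le> m" "m \<le> n" and not_dvd: "\<not> g (Suc n) dvd g m"
    and rep: "g m = (\<Sum>i\<in>{1..Suc n}. a i * g i)" and am: "a m = 0"
  obtains a' where "g m = (\<Sum>i\<in>{1..n}. a' i * g i)" "a' m = 0"
proof -
  define S where "S = (\<Sum>i\<in>{1..n}. a i * g i)"
  have gm: "g m = S + a (Suc n) * g (Suc n)"
    using rep by (simp add: S_def)
  have "Suc n \<in> {2..k}"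
    using n by simp
  then have "cseq g (Suc n) * g (Suc n) \<in> gen g {1..n}"
    using tel unfolding telescopic_def by fastforce
  then obtain b where b: "cseq g (Suc n) * g (Suc n) = (\<Sum>i\<in>{1..n}. b i * g i)"
    unfolding gen_def by blast
  have "dseq g n dvd S"
    unfolding S_def by (rule dseq_dvd_mem_gen[OF mem_genI]) simp
  moreover have "dseq g n dvd g m"
    using dseq_dvd m by simp
  ultimately have "dseq g n dvd a (Suc n) * g (Suc n)"
    using gm by (simp add: dvd_add_right_iff)
  then have "cseq g (Suc n) dvd a (Suc n)"
    using cseq_dvd_coeff[of g "Suc n"] g1 by simp
  then obtain q where q: "a (Suc n) = q * cseq g (Suc n)"
    by (metis dvd_def mult.commute)
  have "q = 0 \<or> b m = 0"
  proof (rule ccontr)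
    assume "\<not> (q = 0 \<or> b m = 0)"
    then have "g m \<le> b m * g m"
      by simp
    also have "\<dots> \<le> cseq g (Suc n) * g (Suc n)"
      unfolding b using m by (intro member_le_sum) auto
    finally have "g m \<le> cseq g (Suc n) * g (Suc n)" .
    moreover have "cseq g (Suc n) * g (Suc n) \<le> g m"
      using gm q \<open>\<not> (q = 0 \<or> b m = 0)\<close> by (simp add: trans_le_add2)
    ultimately have "g m = cseq g (Suc n) * g (Suc n)"
      by simp
    then show False
      using not_dvd by simp
  qed
  then have "a m + q * b m = 0"
    using am by auto
  moreover have "g m = (\<Sum>i\<in>{1..n}. (a i + q * b i) * g i)"
    using gm q b by (simp add: S_def sum.distrib sum_distrib_left algebra_simps)
  ultimately show thesis
    using that[of "\<lambda>i. a i + q * b i"] by simp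
qed

lemma telescopic_sum_avoiding_neq:
  assumes g1: "g 1 > 0" and tel: "telescopic g k" and c_gt1: "\<forall>j\<in>{2..k}. cseq g j > 1"
    and not_dvd: "\<forall>i j. 1 \<le> i \<and> i < j \<and> j \<le> k \<longrightarrow> \<not> g j dvd g i"
    and m: "1 \<le> m" "m \<le> k"
  shows "n \<le> k \<Longrightarrow> a m = 0 \<Longrightarrow> g m \<noteq> (\<Sum>i\<in>{1..n}. a i * g i)"
proof (induction n arbitrary: a)
  case 0
  have "g m \<notin> gen g {1..0}"
    using not_mem_gen_below[OF g1 c_gt1 m, of 0] m by simp
  then show ?case
    by (blast intro: mem_genI)
next
  case (Suc n)
  consider "Suc n < m" | "Suc n = m" | "m \<le> n"
    by linarith
  then show ?case
  proof cases
    case 1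
    then have "g m \<notin> gen g {1..Suc n}"
      using not_mem_gen_below[OF g1 c_gt1 m] by blast
    then show ?thesis
      by (blast intro: mem_genI)
  next
    case 2
    then have "a (Suc n) = 0"
      using Suc.prems by simp
    then show ?thesis
      using Suc by simp
  next
    case 3
    show ?thesis
    proof
      assume rep: "g m = (\<Sum>i\<in>{1..Suc n}. a i * g i)"
      have "1 \<le> n"
        using m(1) 3 by simp
      moreover have "\<not> g (Suc n) dvd g m"
        using not_dvd m 3 Suc.prems by simp
      ultimately obtain a' where "g m = (\<Sum>i\<in>{1..n}. a' i * g i)" "a' m = 0"
        using telescopic_shorten_representation[OF g1 tel _ Suc.prems(1) m(1) 3 _ rep Suc.prems(2)]
        by blast
      then show False
        using Suc.IH[of a'] Suc.prems by simp
    qed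
  qed
qed

lemma telescopic_irredundant_if:
  assumes "g 1 > 0" "telescopic g k" "\<forall>j\<in>{2..k}. cseq g j > 1"
    and "\<forall>i j. 1 \<le> i \<and> i < j \<and> j \<le> k \<longrightarrow> \<not> g j dvd g i"
    and m: "m \<in> {1..k}"
  shows "g m \<notin> gen g ({1..k} - {m})"
proof
  assume "g m \<in> gen g ({1..k} - {m})"
  then obtain a where "g m = (\<Sum>i\<in>{1..k}. a i * g i)" "a m = 0"
    using mem_gen_superset[of "{1..k}" "{1..k} - {m}" "g m" g] m by blast
  then show False
    using telescopic_sum_avoiding_neq[OF assms(1-4), where n=k] m by simp
qed

lemma telescopic_irredundant_iff:
  assumes g1: "g 1 > 0" and tel: "telescopic g k"
  shows "(\<forall>m\<in>{1..k}. g m \<notin> gen g ({1..k} - {m})) \<longleftrightarrow>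
    (\<forall>j\<in>{2..k}. cseq g j > 1) \<and> (\<forall>i j. 1 \<le> i \<and> i < j \<and> j \<le> k \<longrightarrow> \<not> g j dvd g i)"
proof
  assume irredundant: "\<forall>m\<in>{1..k}. g m \<notin> gen g ({1..k} - {m})"
  show "(\<forall>j\<in>{2..k}. cseq g j > 1) \<and>
    (\<forall>i j. 1 \<le> i \<and> i < j \<and> j \<le> k \<longrightarrow> \<not> g j dvd g i)"
  proof (intro conjI ballI allI impI notI)
    fix j assume j: "j \<in> {2..k}"
    have "cseq g j \<noteq> 1"
      using redundant_if_cseq_eq_1[OF tel j] irredundant j by auto
    then show "cseq g j > 1"
      using cseq_pos[of g j] g1 j by fastforce
  next
    fix i j assume "1 \<le> i \<and> i < j \<and> j \<le> k" "g j dvd g i"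
    then show False
      using redundant_if_dvd[of i k j g] irredundant by auto
  qed
next
  assume "(\<forall>j\<in>{2..k}. cseq g j > 1) \<and>
    (\<forall>i j. 1 \<le> i \<and> i < j \<and> j \<le> k \<longrightarrow> \<not> g j dvd g i)"
  then show "\<forall>m\<in>{1..k}. g m \<notin> gen g ({1..k} - {m})"
    using telescopic_irredundant_if[OF g1 tel] by blast
qed

theorem mainTheorem6:
  fixes g :: "nat \<Rightarrow> nat" and k :: nat
  assumes "k \<ge> 1" and "g 1 > 0" and "telescopic g k"
  shows "minimal g k \<longleftrightarrow>
    ((\<forall>j\<in>{2..k}. cseq g j > 1) \<and>
     (\<forall>i j. 1 \<le> i \<and> i < j \<and> j \<le> k \<longrightarrow>
        \<not> (zseq g k j dvd zseq g k i * Cprod g i j)))"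
proof -
  have "(\<forall>i j. 1 \<le> i \<and> i < j \<and> j \<le> k \<longrightarrow>
        \<not> (zseq g k j dvd zseq g k i * Cprod g i j)) \<longleftrightarrow>
      (\<forall>i j. 1 \<le> i \<and> i < j \<and> j \<le> k \<longrightarrow> \<not> g j dvd g i)"
    using zseq_dvd_iff[of g, OF assms(2)] by blast
  then show ?thesis
    unfolding minimal_iff_irredundant telescopic_irredundant_iff[OF assms(2,3)] by simp
qed

end
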